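(* Let $m,n\ge2$ with $1/m+1/n<1$ and $0<|\lambda|<1/(3n)$, and let $P_\lambda(z)=\dfrac{\frac1n((1+z)^n-1)+\lambda^{m+n}z^{m+n}}{1-\lambda^{m+n}z^{m+n}}$. Then $P_\lambda$ has exactly $n-1$ critical points, counted with multiplicity, in the disk $\mathbb{D}(-1,|\lambda|)$; equivalently the polynomial $$E_\lambda(z)=(1+z)^{n-1}+\lambda^{m+n}z^{m+n-1}\Big\{\big(1+\tfrac mn\big)\big[(1+z)^n+n-1\big]-z(1+z)^{n-1}\Big\}$$ has exactly $n-1$ zeros counted with multiplicity in $\mathbb{D}(-1,|\lambda|)$. Moreover $\mathbb{D}(-1,|\lambda|)\subset\mathbb{D}(-\tfrac34,\tfrac34)$.
   Context: $\mathbb{D}(a,r)$ denotes the open Euclidean disk of center $a$ and radius $r$. The finite critical points of $P_\lambda$ are exactly the zeros of $E_\lambda$ (with multiplicity). *)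

theory Defs
  imports "HOL-Analysis.Analysis" "HOL-Computational_Algebra.Polynomial"
begin

definition P_lam :: "complex \<Rightarrow> nat \<Rightarrow> nat \<Rightarrow> complex \<Rightarrow> complex" where
  "P_lam lam m n z =
     ((1 / of_nat n) * ((1 + z) ^ n - 1) + lam ^ (m + n) * z ^ (m + n))
     / (1 - lam ^ (m + n) * z ^ (m + n))"

text \<open>The polynomial E_lambda whose zeros are the finite critical points of P_lambda:
  E(z) = (1+z)^(n-1) + lambda^(m+n) z^(m+n-1) ((1 + m/n)((1+z)^n + n - 1) - z (1+z)^(n-1)).\<close>
definition E_poly :: "complex \<Rightarrow> nat \<Rightarrow> nat \<Rightarrow> complex poly" where
  "E_poly lam m n =
     [:1, 1:] ^ (n - 1)
     + smult (lam ^ (m + n))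
         (monom 1 (m + n - 1) *
           (smult (1 + of_nat m / of_nat n) ([:1, 1:] ^ n + [:of_nat n - 1:])
            - [:0, 1:] * [:1, 1:] ^ (n - 1)))"

end

theory Submission
  imports Defs "HOL-Complex_Analysis.Residue_Theorem"
begin

text \<open>On the circle |z + 1| = |\<lambda>| the correction term \<lambda>^(m+n) z^(m+n-1) {...} of E_\<lambda>
  has modulus of order |\<lambda>|^(m+n) (n + m), which for |\<lambda>| < 1/(3n) is smaller than
  |(1+z)^(n-1)| = |\<lambda>|^(n-1). By Rouche's theorem E_\<lambda> therefore has as many zeros in the
  disk as (1+z)^(n-1), namely n - 1. The library's Rouche theorem counts zeros by zorder weighted
  with winding numbers; for a polynomial and a circle this is the sum of the root multiplicities
  inside.\<close>

lemma zorder_poly: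
  fixes p :: "complex poly"
  assumes "p \<noteq> 0"
  shows "zorder (poly p) z = int (order z p)"
proof -
  obtain q where pq: "p = [:-z, 1:] ^ order z p * q" and "\<not> [:-z, 1:] dvd q"
    using order_decomp[OF assms] by blast
  then have "poly q z \<noteq> 0" by (simp add: dvd_iff_poly_eq_0)
  moreover have "poly p w = poly q w * (w - z) powi int (order z p)" for w
    by (subst pq) (simp add: power_int_of_nat)
  ultimately show ?thesis
    by (intro zorder_eqI[of UNIV]) (auto intro: holomorphic_intros)
qed

lemma sum_winding_zorder_circlepath_poly:
  fixes p :: "complex poly"
  assumes "0 < r" and "p \<noteq> 0" and "\<And>z. z \<in> sphere c r \<Longrightarrow> poly p z \<noteq> 0"
  shows "(\<Sum>z\<in>{z. poly p z = 0}. winding_number (circlepath c r) z * of_int (zorder (poly p) z))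
       = of_nat (\<Sum>z\<in>{z. poly p z = 0 \<and> z \<in> ball c r}. order z p)"
proof -
  have fin: "finite {z. poly p z = 0}" using poly_roots_finite[OF assms(2)] .
  have wind: "winding_number (circlepath c r) z = (if z \<in> ball c r then 1 else 0)"
    if "poly p z = 0" for z
  proof (cases "z \<in> ball c r")
    case True then show ?thesis by (simp add: winding_number_circlepath dist_norm norm_minus_commute)
  next
    case False
    with assms(3) that have "z \<notin> cball c r" by fastforce
    then have "winding_number (circlepath c r) z = 0"
      by (intro winding_number_zero_outside[of _ "cball c r"])
         (use assms(1) in \<open>auto simp: path_image_circlepath_nonneg\<close>)
    with False show ?thesis by simp
  qed
  have "(\<Sum>z\<in>{z. poly p z = 0}. winding_number (circlepath c r) z * of_int (zorder (poly p) z))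
      = (\<Sum>z\<in>{z. poly p z = 0}. if z \<in> ball c r then of_nat (order z p) else 0)"
    by (intro sum.cong refl) (simp add: wind zorder_poly[OF assms(2)])
  also have "\<dots> = of_nat (\<Sum>z\<in>{z. poly p z = 0}. if z \<in> ball c r then order z p else 0)"
    unfolding of_nat_sum by (intro sum.cong) auto
  also have "(\<Sum>z\<in>{z. poly p z = 0}. if z \<in> ball c r then order z p else 0)
      = (\<Sum>z\<in>{z. poly p z = 0 \<and> z \<in> ball c r}. order z p)"
    using sum.inter_filter[OF fin, of "\<lambda>z. order z p" "\<lambda>z. z \<in> ball c r"] by simp
  finally show ?thesis .
qed

lemma Rouche_poly_ball:
  fixes p q :: "complex poly"
  assumes "0 < r" and less: "\<And>z. z \<in> sphere c r \<Longrightarrow> cmod (poly q z) < cmod (poly p z)"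
  shows "(\<Sum>z\<in>{z. poly (p + q) z = 0 \<and> z \<in> ball c r}. order z (p + q))
       = (\<Sum>z\<in>{z. poly p z = 0 \<and> z \<in> ball c r}. order z p)"
proof -
  have p_nz: "poly p z \<noteq> 0" and pq_nz: "poly (p + q) z \<noteq> 0" if "z \<in> sphere c r" for z
    using less[OF that] by (auto simp: add_eq_0_iff2)
  have circ: "c + of_real r \<in> sphere c r" using assms(1) by (simp add: dist_norm)
  have "p \<noteq> 0" "p + q \<noteq> 0" using p_nz[OF circ] pq_nz[OF circ] by (metis poly_0)+
  have "(\<Sum>z\<in>{z \<in> UNIV. poly p z + poly q z = 0}.
           winding_number (circlepath c r) z * of_int (zorder (\<lambda>z. poly p z + poly q z) z))
      = (\<Sum>z\<in>{z \<in> UNIV. poly p z = 0}. winding_number (circlepath c r) z * of_int (zorder (poly p) z))"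
    by (rule Rouche_theorem)
       (use assms \<open>p \<noteq> 0\<close> \<open>p + q \<noteq> 0\<close> in
         \<open>auto intro: holomorphic_intros poly_roots_finite simp flip: poly_add
               simp: path_image_circlepath_nonneg\<close>)
  then have "(\<Sum>z\<in>{z. poly (p + q) z = 0}.
                winding_number (circlepath c r) z * of_int (zorder (poly (p + q)) z))
      = (\<Sum>z\<in>{z. poly p z = 0}. winding_number (circlepath c r) z * of_int (zorder (poly p) z))"
    by (simp flip: poly_add)
  then show ?thesis
    by (simp only: sum_winding_zorder_circlepath_poly[OF assms(1) \<open>p \<noteq> 0\<close> p_nz]
          sum_winding_zorder_circlepath_poly[OF assms(1) \<open>p + q \<noteq> 0\<close> pq_nz] of_nat_eq_iff)
qed

lemma linear_le_four_power: "1 \<le> m \<Longrightarrow> m + 3 \<le> (4::nat) ^ m"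
  by (induction m rule: dec_induct) auto

lemma one_plus_power_le_two:
  fixes r :: real
  assumes "0 \<le> r" and "real n * r \<le> 1/2"
  shows "(1 + r) ^ n \<le> 2"
proof -
  have "(1 + r) ^ n \<le> exp r ^ n" using assms(1) by (intro power_mono) auto
  also have "\<dots> = exp (real n * r)" by (simp add: exp_of_nat_mult)
  also have "\<dots> \<le> 1 + 2 * (real n * r)" using assms by (intro real_exp_bound_lemma) auto
  finally show ?thesis using assms(2) by linarith
qed

lemma E_correction_bound_lt:
  fixes r :: real and m n :: nat
  assumes r: "0 < r" "real n * r < 1/3" and "n \<ge> 2" "m \<ge> 2"
  shows "r^(m+n) * (1+r)^(m+n-1) * ((1 + m/n) * (r^n + (real n - 1)) + (1+r) * r^(n-1)) < r^(n-1)"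
proof -
  define B where "B = (1 + m/n) * (r^n + (real n - 1)) + (1+r) * r^(n-1)"
  define x where "x = r * (1 + r)"
  have "2 * r \<le> n * r" using \<open>n \<ge> 2\<close> r by (intro mult_right_mono) auto
  then have r6: "r \<le> 1/6" using r by linarith
  have B_le: "B \<le> n + m + 1"
  proof -
    have "(1 + m/n) * (r^n + (real n - 1)) \<le> (1 + m/n) * n"
      using r r6 \<open>n \<ge> 2\<close> by (intro mult_left_mono) (auto simp: power_le_one)
    also have "\<dots> = n + m" using \<open>n \<ge> 2\<close> by (simp add: field_simps)
    finally have "(1 + m/n) * (r^n + (real n - 1)) \<le> n + m" .
    moreover have "(1+r) * r^(n-1) \<le> 2 * (1/2)"
    proof (intro mult_mono)
      have "r^(n-1) \<le> r^1" using r r6 \<open>n \<ge> 2\<close> by (intro power_decreasing) auto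
      then show "r^(n-1) \<le> 1/2" using r6 by simp
    qed (use r r6 in auto)
    ultimately show ?thesis unfolding B_def by linarith
  qed
  have B0: "0 \<le> B"
    unfolding B_def using r \<open>n \<ge> 2\<close> by (intro add_nonneg_nonneg mult_nonneg_nonneg) auto
  have rB: "r * B \<le> (real m + 3) / 6"
  proof -
    have "r * B \<le> r * (n + m + 1)" using B_le r by (intro mult_left_mono) auto
    also have "\<dots> = n * r + r * (real m + 1)" by (simp add: algebra_simps)
    also have "\<dots> \<le> 1/3 + (1/6) * (real m + 1)" using r r6 by (intro add_mono mult_right_mono) auto
    finally show ?thesis by (simp add: field_simps)
  qed
  have "x \<le> (1/6) * (3/2)" unfolding x_def using r r6 by (intro mult_mono) auto
  then have xm: "x^m \<le> (1/4)^m" using r by (intro power_mono) (auto simp: x_def)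
  have "real (n-1) * r \<le> real n * r" using r by (intro mult_right_mono) auto
  then have power: "(1+r)^(n-1) \<le> 2"
    by (intro one_plus_power_le_two) (use r in linarith)+
  have m3: "(real m + 3) / 4^m \<le> (1::real)"
    using linear_le_four_power[of m] \<open>m \<ge> 2\<close>
    by (simp add: field_simps) (metis of_nat_le_iff of_nat_add of_nat_numeral of_nat_power)
  have "r^(m+n) * (1+r)^(m+n-1) = r^(n-1) * (x^m * (1+r)^(n-1) * r)"
  proof -
    obtain k where "n = Suc k" using \<open>n \<ge> 2\<close> by (cases n) auto
    then show ?thesis unfolding x_def by (simp add: power_add power_mult_distrib mult_ac)
  qed
  then have "r^(m+n) * (1+r)^(m+n-1) * B = r^(n-1) * (x^m * (1+r)^(n-1) * (r * B))"
    by (simp add: mult_ac)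
  also have "\<dots> < r^(n-1) * 1"
  proof (intro mult_strict_left_mono)
    have "x^m * (1+r)^(n-1) * (r * B) \<le> (1/4)^m * 2 * ((real m + 3) / 6)"
      using xm power rB r B0 by (intro mult_mono) (auto simp: x_def)
    also have "\<dots> = (1/3) * ((real m + 3) / 4^m)" by (simp add: power_one_over field_simps)
    finally show "x^m * (1+r)^(n-1) * (r * B) < 1" using m3 by linarith
  qed (use r in simp)
  finally show ?thesis by (simp add: B_def)
qed

lemma sum_order_linear_power:
  fixes a :: complex
  assumes "a \<in> B"
  shows "(\<Sum>z\<in>{z. poly ([:-a, 1:] ^ k) z = 0 \<and> z \<in> B}. order z ([:-a, 1:] ^ k)) = k"
proof (cases "k = 0")
  case False
  then have "{z. poly ([:-a, 1:] ^ k) z = 0 \<and> z \<in> B} = {a}" using assms by auto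
  then show ?thesis by (simp add: order_power_n_n)
qed simp

definition E_correction :: "nat \<Rightarrow> nat \<Rightarrow> complex poly" where
  "E_correction m n =
     monom 1 (m + n - 1) *
       (smult (1 + of_nat m / of_nat n) ([:1, 1:] ^ n + [:of_nat n - 1:])
        - [:0, 1:] * [:1, 1:] ^ (n - 1))"

lemma E_poly_eq: "E_poly lam m n = [:1, 1:] ^ (n - 1) + smult (lam ^ (m + n)) (E_correction m n)"
  by (simp add: E_poly_def E_correction_def)

lemma norm_E_correction_le:
  assumes "n \<ge> 1" and z: "cmod (1 + z) = r"
  shows "cmod (poly (E_correction m n) z)
    \<le> (1+r)^(m+n-1) * ((1 + m/n) * (r^n + (real n - 1)) + (1+r) * r^(n-1))"
proof -
  have zr: "cmod z \<le> 1 + r" using norm_triangle_ineq4[of "1 + z" 1] z by simp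
  have r0: "0 \<le> r" using z norm_ge_zero by metis
  have "(1 + of_nat m / of_nat n :: complex) = of_real (1 + m/n)" by simp
  then have A: "cmod (1 + of_nat m / of_nat n :: complex) = 1 + m/n" by (simp only: norm_of_real) simp
  have "(of_nat n - 1 :: complex) = of_nat (n - 1)" using assms(1) by (simp add: of_nat_diff)
  then have "cmod (of_nat n - 1 :: complex) = real n - 1" using assms(1) by (simp only: norm_of_nat)
  then have h1: "cmod ((1+z)^n + (of_nat n - 1)) \<le> r^n + (real n - 1)"
    using norm_triangle_ineq[of "(1+z)^n" "of_nat n - 1"] z by (simp add: norm_power)
  have h2: "cmod (z * (1+z)^(n-1)) \<le> (1+r) * r^(n-1)"
    unfolding norm_mult norm_power z using zr r0 by (intro mult_right_mono) auto
  have bracket: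
      "cmod ((1 + of_nat m / of_nat n) * ((1+z)^n + (of_nat n - 1)) - z * (1+z)^(n-1))
        \<le> (1 + m/n) * (r^n + (real n - 1)) + (1+r) * r^(n-1)"
    by (rule order.trans[OF norm_triangle_ineq4])
       (use h1 h2 in \<open>unfold norm_mult A, intro add_mono mult_left_mono, auto\<close>)
  have "cmod (poly (E_correction m n) z) = cmod z ^ (m+n-1)
      * cmod ((1 + of_nat m / of_nat n) * ((1+z)^n + (of_nat n - 1)) - z * (1+z)^(n-1))"
    by (simp add: E_correction_def poly_monom norm_mult norm_power)
  also have "\<dots> \<le> (1+r)^(m+n-1) * ((1 + m/n) * (r^n + (real n - 1)) + (1+r) * r^(n-1))"
    using zr r0 bracket by (intro mult_mono power_mono) auto
  finally show ?thesis .
qed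

theorem lemma4p2:
  fixes m n :: nat and lam :: complex
  assumes "m \<ge> 2" and "n \<ge> 2"
    and "1 / real m + 1 / real n < 1"
    and "0 < cmod lam" and "cmod lam < 1 / (3 * real n)"
  shows "(\<Sum>z \<in> {z. poly (E_poly lam m n) z = 0 \<and> z \<in> ball (-1) (cmod lam)}.
            order z (E_poly lam m n)) = n - 1
         \<and> ball (-1 :: complex) (cmod lam) \<subseteq> ball (-3/4) (3/4)"
proof
  define r where "r = cmod lam"
  have r: "0 < r" "real n * r < 1/3" using assms(2,4,5) by (auto simp: r_def field_simps)
  have small: "cmod (poly (smult (lam ^ (m + n)) (E_correction m n)) z)
      < cmod (poly ([:1, 1:] ^ (n - 1)) z)"
    if "z \<in> sphere (-1) r" for z
  proof -
    have "-1 - z = - (1 + z)" by simp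
    then have z: "cmod (1 + z) = r" using that by (simp only: mem_sphere dist_norm norm_minus_cancel)
    have "cmod (poly (smult (lam ^ (m + n)) (E_correction m n)) z)
        = r^(m+n) * cmod (poly (E_correction m n) z)"
      by (simp add: norm_mult norm_power r_def)
    also have "\<dots> \<le> r^(m+n) * ((1+r)^(m+n-1) * ((1 + m/n) * (r^n + (real n - 1)) + (1+r) * r^(n-1)))"
      using norm_E_correction_le[OF _ z] assms(2) r(1) by (intro mult_left_mono) auto
    also have "\<dots> < r^(n-1)"
      using E_correction_bound_lt[OF r assms(2,1)] by (simp add: mult.assoc)
    also have "\<dots> = cmod (poly ([:1, 1:] ^ (n - 1)) z)" by (simp add: norm_power z add.commute)
    finally show ?thesis .
  qed
  have "(\<Sum>z \<in> {z. poly (E_poly lam m n) z = 0 \<and> z \<in> ball (-1) r}. order z (E_poly lam m n))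
      = (\<Sum>z \<in> {z. poly ([:1, 1 :: complex:] ^ (n - 1)) z = 0 \<and> z \<in> ball (-1) r}.
            order z ([:1, 1:] ^ (n - 1)))"
    unfolding E_poly_eq by (rule Rouche_poly_ball[OF r(1) small])
  also have "\<dots> = n - 1" using sum_order_linear_power[of "-1" "ball (-1) r" "n - 1"] r(1) by simp
  finally show "(\<Sum>z \<in> {z. poly (E_poly lam m n) z = 0 \<and> z \<in> ball (-1) (cmod lam)}.
      order z (E_poly lam m n)) = n - 1" by (simp only: r_def)
  have "2 * r \<le> real n * r" using r assms(2) by (intro mult_right_mono) auto
  then have "2 * cmod lam \<le> 1" using r unfolding r_def by linarith
  then show "ball (-1 :: complex) (cmod lam) \<subseteq> ball (-3/4) (3/4)"
    by (simp add: ball_subset_ball_iff dist_norm)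
qed

end
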